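(* In the model of the context, suppose $F_e$ is an equilibrium arrival distribution for the variant in which walk-ins may only arrive in $[0,T]$, and suppose $F_e$ has no atom at $0$. Then $F_e$ is also an equilibrium arrival distribution for the variant in which walk-ins may arrive at any time in $(-\infty,T]$.
   Context: Model: single server that starts serving at time $0$ (no service before $0$; in the early-arrival variant, walk-ins arriving before $0$ queue in arrival order), walk-ins admitted up to time $T$, service times i.i.d. exponential with rate $\mu$, $M$ scheduled customers at deterministic times $0\le\tau_1<\dots<\tau_M\le T$ with non-preemptive priority over walk-ins (otherwise FCFS; simultaneous walk-ins ordered uniformly at random), Poisson($\lambda$) number of walk-ins each independently choosing its arrival time from a common cdf $F$ on the admissible set ($[0,T]$ or $(-\infty,T]$). Waiting time = time from arrival until start of service; $E_w(t)$ is the expected waiting time of a walk-in arriving at $t$ when all others use $F$. $F_e$ is an equilibrium arrival distribution (for a given admissible set) if there is a constant $E_w$ with $E_w(t)=E_w$ on the support of $F_e$ and $E_w(t)\ge E_w$ at every admissible $t$ outside it. An atom at $0$ means $F_e(0)>0$. *)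

theory Defs
  imports "HOL-Probability.Probability"
begin

type_synonym cust = "real \<times> bool \<times> real \<times> real"

definition arr :: "cust \<Rightarrow> real" where "arr c = fst c"
definition sched :: "cust \<Rightarrow> bool" where "sched c = fst (snd c)"
definition tkey :: "cust \<Rightarrow> real" where "tkey c = fst (snd (snd c))"
definition serv :: "cust \<Rightarrow> real" where "serv c = snd (snd (snd c))"

text \<open>Strict service priority among customers present in the queue:
  scheduled customers before walk-ins (non-preemptive priority), otherwise
  FCFS by arrival time, ties broken by the (uniformly random) key.\<close>
definition before :: "cust \<Rightarrow> cust \<Rightarrow> bool" where
  "before c d \<longleftrightarrow> (sched c \<and> \<not> sched d) \<or>
     (sched c = sched d \<and> (arr c < arr d \<or> (arr c = arr d \<and> tkey c < tkey d)))"

text \<open>Customer selected when the server becomes free at time c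
  (if nobody is present, the server idles until the next arrival).\<close>
definition sel :: "real \<Rightarrow> (nat \<times> cust) list \<Rightarrow> nat \<times> cust" where
  "sel c xs = (let c' = max c (Min ((arr \<circ> snd) ` set xs));
                   E = filter (\<lambda>p. arr (snd p) \<le> c') xs
               in foldl (\<lambda>b p. if before (snd p) (snd b) then p else b) (hd E) (tl E))"

text \<open>start k c xs i: start of service of the customer with identifier i, when
  the server is free from time c on and xs are the customers not yet served
  (k is fuel; k \<ge> length xs suffices).\<close>
primrec start :: "nat \<Rightarrow> real \<Rightarrow> (nat \<times> cust) list \<Rightarrow> nat \<Rightarrow> real" where
  "start 0 c xs i = 0"
| "start (Suc k) c xs i =
     (if xs = [] then 0 else
        (let p = sel c xs; s = max c (arr (snd p)) in
          if fst p = i then s else start k (s + serv (snd p)) (remove1 p xs) i))"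

text \<open>Waiting time of the tagged walk-in (identifier 0) arriving at t with key u
  and service time v, scheduled customers at times tau with service times ss,
  and n other walk-ins with (arrival, key, service) given by ws.
  The server starts serving at time 0.\<close>
definition wait_tagged ::
  "real list \<Rightarrow> real \<Rightarrow> real \<times> real \<Rightarrow> (nat \<Rightarrow> real) \<Rightarrow> nat \<Rightarrow> (nat \<Rightarrow> real \<times> real \<times> real) \<Rightarrow> real"
where
  "wait_tagged tau t uv ss n ws =
    (let M = length tau;
         tagged = [(0::nat, (t, False, fst uv, snd uv))];
         schs = map (\<lambda>j. (Suc j, (tau ! j, True, 0, ss j))) [0..<M];
         wks = map (\<lambda>j. (Suc (M + j), (fst (ws j), False, fst (snd (ws j)), snd (snd (ws j))))) [0..<n];
         xs = tagged @ schs @ wks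
     in start (length xs) 0 xs 0 - t)"

definition unif01 :: "real measure" where
  "unif01 = uniform_measure lborel {0..1}"

definition expo :: "real \<Rightarrow> real measure" where
  "expo mu = density lborel (\<lambda>x. ennreal (exponential_density mu x))"

text \<open>Law of (arrival time, key, service time) of one other walk-in.\<close>
definition walkin_law :: "real \<Rightarrow> real measure \<Rightarrow> (real \<times> real \<times> real) measure" where
  "walkin_law mu F = F \<Otimes>\<^sub>M (unif01 \<Otimes>\<^sub>M expo mu)"

text \<open>E_w(t): expected waiting time of a walk-in arriving at t when the number of
  other walk-ins is Poisson(lam) and each uses F.\<close>
definition Ew :: "real \<Rightarrow> real \<Rightarrow> real list \<Rightarrow> real measure \<Rightarrow> real \<Rightarrow> ennreal" where
  "Ew lam mu tau F t =
    (\<Sum>n. ennreal (pmf (poisson_pmf lam) n) *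
       (\<integral>\<^sup>+ \<omega>. ennreal (wait_tagged tau t (fst \<omega>) (fst (snd \<omega>)) n (snd (snd \<omega>)))
          \<partial>((unif01 \<Otimes>\<^sub>M expo mu) \<Otimes>\<^sub>M
             (PiM {..<length tau} (\<lambda>_. expo mu) \<Otimes>\<^sub>M PiM {..<n} (\<lambda>_. walkin_law mu F)))))"

definition dist_support :: "real measure \<Rightarrow> real set" where
  "dist_support F = {t. \<forall>e>0. measure F {t - e<..<t + e} > 0}"

definition is_equilibrium ::
  "real \<Rightarrow> real \<Rightarrow> real list \<Rightarrow> real set \<Rightarrow> real measure \<Rightarrow> bool" where
  "is_equilibrium lam mu tau A F \<longleftrightarrow>
     real_distribution F \<and> emeasure F A = 1 \<and>
     (\<exists>c. (\<forall>t\<in>dist_support F. Ew lam mu tau F t = c) \<and>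
          (\<forall>t\<in>A - dist_support F. c \<le> Ew lam mu tau F t))"

end

theory Submission
  imports Defs
begin

text \<open>If F has no atom at 0, then almost surely every other walk-in arrives strictly after 0
  and every scheduled customer at or after 0, while the server opens only at 0. A walk-in
  arriving at some t \<le> 0 therefore starts service exactly when it would have started had it
  arrived at 0: the service discipline cannot distinguish the two. Its waiting time grows by
  -t \<ge> 0, so E_w(t) \<ge> E_w(0) \<ge> E_w, and the equilibrium conditions on [0,T] extend to
  (-\<infinity>,T] without changing the support.\<close>

definition move_tagged_to_zero :: "nat \<times> cust \<Rightarrow> nat \<times> cust" where
  "move_tagged_to_zero p = (if fst p = 0 then (0, (0, snd (snd p))) else p)"

definition early_tagged_entry :: "nat \<times> cust \<Rightarrow> bool" where
  "early_tagged_entry p \<longleftrightarrow>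
     (if fst p = 0 then arr (snd p) \<le> 0 \<and> \<not> sched (snd p)
      else 0 \<le> arr (snd p) \<and> (\<not> sched (snd p) \<longrightarrow> 0 < arr (snd p)) \<and> 0 \<le> serv (snd p))"

definition early_tagged_queue :: "(nat \<times> cust) list \<Rightarrow> bool" where
  "early_tagged_queue xs \<longleftrightarrow> distinct (map fst xs) \<and> (\<forall>p\<in>set xs. early_tagged_entry p)"

definition choose_before :: "nat \<times> cust \<Rightarrow> nat \<times> cust \<Rightarrow> nat \<times> cust" where
  "choose_before b p = (if before (snd p) (snd b) then p else b)"

lemma move_tagged_to_zero_simps [simp]:
  "fst (move_tagged_to_zero p) = fst p"
  "arr (snd (move_tagged_to_zero p)) = (if fst p = 0 then 0 else arr (snd p))"
  "sched (snd (move_tagged_to_zero p)) = sched (snd p)"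
  "tkey (snd (move_tagged_to_zero p)) = tkey (snd p)"
  "serv (snd (move_tagged_to_zero p)) = serv (snd p)"
  by (auto simp: move_tagged_to_zero_def arr_def sched_def tkey_def serv_def)

lemma early_tagged_queueD:
  assumes "early_tagged_queue xs"
  shows "distinct xs" "inj_on fst (set xs)" "p \<in> set xs \<Longrightarrow> early_tagged_entry p"
  using assms by (auto simp: early_tagged_queue_def distinct_map)

lemma early_tagged_queue_remove1:
  "early_tagged_queue xs \<Longrightarrow> early_tagged_queue (remove1 p xs)"
  unfolding early_tagged_queue_def distinct_map
  using set_remove1_subset[of p xs] by (auto intro: inj_on_subset)

lemma remove1_map_inj_on:
  assumes "inj_on f (set xs)" "p \<in> set xs"
  shows "remove1 (f p) (map f xs) = map f (remove1 p xs)"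
  using assms
proof (induction xs)
  case (Cons x xs)
  show ?case
  proof (cases "x = p")
    case False
    then have "f x \<noteq> f p" using Cons.prems by (auto dest: inj_onD)
    then show ?thesis using Cons False by (auto simp: inj_on_insert)
  qed simp
qed simp

lemma before_move_tagged_to_zero:
  assumes "early_tagged_queue xs" "p \<in> set xs" "q \<in> set xs"
  shows "before (snd (move_tagged_to_zero p)) (snd (move_tagged_to_zero q)) = before (snd p) (snd q)"
proof (cases "fst p = fst q")
  case True
  with assms have "p = q" by (meson early_tagged_queueD(2) inj_onD)
  then show ?thesis by (simp add: before_def)
next
  case False
  have "early_tagged_entry p" "early_tagged_entry q"
    using assms by (auto dest: early_tagged_queueD(3))
  then show ?thesis using False
    by (cases "fst p = 0"; cases "fst q = 0"; auto simp: early_tagged_entry_def before_def)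
qed

lemma foldl_choose_before_move_tagged_to_zero:
  assumes "early_tagged_queue xs" "set (b # ys) \<subseteq> set xs"
  shows "foldl choose_before (move_tagged_to_zero b) (map move_tagged_to_zero ys)
           = move_tagged_to_zero (foldl choose_before b ys)
         \<and> foldl choose_before b ys \<in> set (b # ys)"
  using assms(2)
proof (induction ys arbitrary: b)
  case (Cons y ys)
  have "choose_before (move_tagged_to_zero b) (move_tagged_to_zero y) = move_tagged_to_zero (choose_before b y)"
    using before_move_tagged_to_zero[OF assms(1), of y b] Cons.prems by (auto simp: choose_before_def)
  moreover have "set (choose_before b y # ys) \<subseteq> set xs" "choose_before b y \<in> set (b # y # ys)"
    using Cons.prems by (auto simp: choose_before_def)
  ultimately show ?case using Cons.IH[of "choose_before b y"] by auto
qed simp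

lemma sel_threshold_move_tagged_to_zero:
  assumes "early_tagged_queue xs" "xs \<noteq> []" "0 \<le> c"
  shows "max c (Min ((arr \<circ> snd) ` set (map move_tagged_to_zero xs)))
       = max c (Min ((arr \<circ> snd) ` set xs))"
proof (cases "\<exists>p\<in>set xs. fst p = 0")
  case True
  then obtain p where p: "p \<in> set xs" "fst p = 0" by blast
  then have "arr (snd p) \<le> 0"
    using assms(1) by (auto dest: early_tagged_queueD(3) simp: early_tagged_entry_def)
  then have "Min ((arr \<circ> snd) ` set xs) \<le> 0"
    using p by (intro Min.coboundedI[THEN order.trans]) auto
  moreover have "Min ((arr \<circ> snd) ` set (map move_tagged_to_zero xs)) \<le> 0"
    using p by (intro Min.coboundedI[THEN order.trans, of _ 0])
      (auto simp: image_iff intro!: bexI[of _ p])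
  ultimately show ?thesis using assms(3) by simp
next
  case False
  then have "map move_tagged_to_zero xs = xs"
    by (intro map_idI) (auto simp: move_tagged_to_zero_def)
  then show ?thesis by simp
qed

lemma sel_move_tagged_to_zero:
  assumes "early_tagged_queue xs" "xs \<noteq> []" "0 \<le> c"
  shows "sel c (map move_tagged_to_zero xs) = move_tagged_to_zero (sel c xs) \<and> sel c xs \<in> set xs"
proof -
  define c' where "c' = max c (Min ((arr \<circ> snd) ` set xs))"
  define E where "E = filter (\<lambda>p. arr (snd p) \<le> c') xs"
  have "filter (\<lambda>p. arr (snd p) \<le> c') (map move_tagged_to_zero xs) = map move_tagged_to_zero E"
    unfolding E_def filter_map
  proof (intro arg_cong[where f="map move_tagged_to_zero"] filter_cong refl)
    fix p assume "p \<in> set xs"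
    then have "early_tagged_entry p" by (rule early_tagged_queueD(3)[OF assms(1)])
    then show "((\<lambda>p. arr (snd p) \<le> c') \<circ> move_tagged_to_zero) p = (arr (snd p) \<le> c')"
      using assms(3) by (cases "fst p = 0") (auto simp: c'_def early_tagged_entry_def)
  qed
  moreover obtain q where "q \<in> set xs" "arr (snd q) = Min ((arr \<circ> snd) ` set xs)"
    using assms(2) Min_in[of "(arr \<circ> snd) ` set xs"] by (auto simp del: Min_in)
  then have "q \<in> set E" by (auto simp: E_def c'_def)
  ultimately have sel_moved: "sel c (map move_tagged_to_zero xs)
      = foldl choose_before (move_tagged_to_zero (hd E)) (map move_tagged_to_zero (tl E))"
    unfolding sel_def Let_def sel_threshold_move_tagged_to_zero[OF assms] c'_def[symmetric]
    by (cases E) (simp_all add: choose_before_def[abs_def])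
  have sel_orig: "sel c xs = foldl choose_before (hd E) (tl E)"
    unfolding sel_def Let_def E_def c'_def choose_before_def by simp
  have "set E \<subseteq> set xs" by (simp add: E_def)
  then have head_tail: "set (hd E # tl E) \<subseteq> set xs"
    using \<open>q \<in> set E\<close> by (cases E) auto
  show ?thesis
    using foldl_choose_before_move_tagged_to_zero[OF assms(1) head_tail] sel_orig sel_moved head_tail
    by auto
qed

lemma start_move_tagged_to_zero:
  assumes "early_tagged_queue xs" "0 \<le> c"
  shows "start k c (map move_tagged_to_zero xs) 0 = start k c xs 0"
  using assms
proof (induction k arbitrary: c xs)
  case (Suc k)
  show ?case
  proof (cases "xs = []")
    case False
    define p where "p = sel c xs"
    have sel_p: "sel c (map move_tagged_to_zero xs) = move_tagged_to_zero p" "p \<in> set xs"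
      using sel_move_tagged_to_zero[OF Suc.prems(1) False Suc.prems(2)] by (auto simp: p_def)
    have p: "early_tagged_entry p" using Suc.prems(1) sel_p(2) by (rule early_tagged_queueD(3))
    have start_p: "max c (arr (snd (move_tagged_to_zero p))) = max c (arr (snd p))"
      using p Suc.prems(2) by (auto simp: early_tagged_entry_def split: if_splits)
    show ?thesis
    proof (cases "fst p = 0")
      case True
      then show ?thesis using False sel_p start_p by (simp add: Let_def p_def[symmetric])
    next
      case untagged: False
      have "inj_on move_tagged_to_zero (set xs)"
        using early_tagged_queueD(2)[OF Suc.prems(1)]
        by (metis move_tagged_to_zero_simps(1) inj_on_def)
      then have "remove1 (move_tagged_to_zero p) (map move_tagged_to_zero xs)
          = map move_tagged_to_zero (remove1 p xs)"
        using sel_p(2) by (rule remove1_map_inj_on)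
      moreover have "0 \<le> max c (arr (snd p)) + serv (snd p)"
        using p untagged Suc.prems(2) by (auto simp: early_tagged_entry_def)
      ultimately show ?thesis
        using False sel_p start_p untagged
          Suc.IH[OF early_tagged_queue_remove1[OF Suc.prems(1)]]
        by (simp add: Let_def p_def[symmetric])
    qed
  qed simp
qed simp

lemma wait_tagged_early_arrival:
  assumes t: "t \<le> 0" and "\<forall>x\<in>set tau. 0 \<le> x" and "\<forall>j<length tau. 0 \<le> ss j"
    and "\<forall>j<n. 0 < fst (ws j) \<and> 0 \<le> snd (snd (ws j))"
  shows "wait_tagged tau t uv ss n ws = wait_tagged tau 0 uv ss n ws - t"
proof -
  define schs where "schs = map (\<lambda>j. (Suc j, (tau ! j, True, 0::real, ss j))) [0..<length tau]"
  define wks where "wks = map (\<lambda>j. (Suc (length tau + j),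
      (fst (ws j), False, fst (snd (ws j)), snd (snd (ws j))))) [0..<n]"
  define xs where "xs = (0::nat, (t, False, fst uv, snd uv)) # schs @ wks"
  have moved: "map move_tagged_to_zero xs = (0::nat, (0::real, False, fst uv, snd uv)) # schs @ wks"
    unfolding xs_def schs_def wks_def by (auto simp: move_tagged_to_zero_def)
  have "distinct (map fst xs)"
    unfolding xs_def schs_def wks_def by (auto simp: distinct_map inj_on_def)
  moreover have "\<forall>p\<in>set xs. early_tagged_entry p"
    using assms unfolding xs_def schs_def wks_def
    by (auto simp: early_tagged_entry_def arr_def sched_def serv_def less_imp_le)
  ultimately have "start (length xs) 0 (map move_tagged_to_zero xs) 0 = start (length xs) 0 xs 0"
    by (intro start_move_tagged_to_zero) (auto simp: early_tagged_queue_def)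
  moreover have "wait_tagged tau 0 uv ss n ws = start (length xs) 0 (map move_tagged_to_zero xs) 0"
    unfolding moved wait_tagged_def Let_def by (simp add: xs_def schs_def wks_def del: start.simps)
  moreover have "wait_tagged tau t uv ss n ws = start (length xs) 0 xs 0 - t"
    unfolding wait_tagged_def Let_def by (simp add: xs_def schs_def wks_def del: start.simps)
  ultimately show ?thesis by simp
qed

lemma AE_pair_fstI:
  assumes "prob_space M2" "AE x in M1. P x"
  shows "AE z in M1 \<Otimes>\<^sub>M M2. P (fst z)"
  by (rule AE_distrD[of fst _ M1]) (simp_all only: prob_space.distr_pair_fst[OF assms(1)] assms(2) measurable_fst)

lemma distr_pair_snd_prob_space:
  assumes "prob_space M1" "prob_space M2"
  shows "distr (M1 \<Otimes>\<^sub>M M2) M2 snd = M2"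
proof (intro measure_eqI)
  interpret M1: prob_space M1 by fact
  interpret M2: prob_space M2 by fact
  interpret pair_sigma_finite M1 M2 by unfold_locales
  fix A assume A: "A \<in> sets (distr (M1 \<Otimes>\<^sub>M M2) M2 snd)"
  then have "emeasure (distr (M1 \<Otimes>\<^sub>M M2) M2 snd) A = emeasure (M1 \<Otimes>\<^sub>M M2) (space M1 \<times> A)"
    by (auto simp: emeasure_distr space_pair_measure dest: sets.sets_into_space
        intro!: arg_cong2[where f=emeasure])
  with A show "emeasure (distr (M1 \<Otimes>\<^sub>M M2) M2 snd) A = emeasure M2 A"
    using M2.emeasure_pair_measure_Times[of "space M1" M1 A] by (simp add: M1.emeasure_space_1)
qed simp

lemma AE_pair_sndI:
  assumes "prob_space M1" "prob_space M2" "AE x in M2. P x"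
  shows "AE z in M1 \<Otimes>\<^sub>M M2. P (snd z)"
  by (rule AE_distrD[of snd _ M2]) (simp_all only: distr_pair_snd_prob_space[OF assms(1,2)] assms(3) measurable_snd)

lemma AE_PiM_all:
  fixes k :: nat
  assumes "\<And>i. prob_space (N i)" "\<And>i. i < k \<Longrightarrow> AE x in N i. P i x"
  shows "AE f in PiM {..<k} N. \<forall>j<k. P j (f j)"
proof -
  interpret product_prob_space N "{..<k}"
    by (intro product_prob_spaceI assms(1))
  have "\<forall>j\<in>{..<k}. AE f in PiM {..<k} N. P j (f j)"
    using AE_component assms(2) by blast
  then have "AE f in PiM {..<k} N. \<forall>j\<in>{..<k}. P j (f j)"
    by (intro eventually_ball_finite) simp_all
  then show ?thesis by auto
qed

lemma prob_space_unif01: "prob_space unif01"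
  unfolding unif01_def by (rule prob_space_uniform_measure) auto

lemma prob_space_expo: "0 < mu \<Longrightarrow> prob_space (expo mu)"
  unfolding expo_def by (rule prob_space_exponential_density)

lemma AE_expo_nonneg: "AE x in expo mu. 0 \<le> x"
  unfolding expo_def by (subst AE_density) (auto simp: exponential_density_def)

lemma prob_space_walkin_law: "real_distribution F \<Longrightarrow> 0 < mu \<Longrightarrow> prob_space (walkin_law mu F)"
  unfolding walkin_law_def real_distribution_def
  by (intro prob_space_pair prob_space_unif01 prob_space_expo) auto

lemma AE_pos_if_no_atom_at_zero:
  assumes "real_distribution F" "\<not> (cdf F 0 > 0)"
  shows "AE x in F. 0 < x"
proof -
  interpret real_distribution F by fact
  have "cdf F 0 = 0" using assms(2) cdf_nonneg[of 0] by linarith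
  then have "emeasure F {..0} = 0" by (simp add: cdf_def emeasure_eq_measure)
  then show ?thesis by (intro AE_I[of _ _ "{..0}"]) auto
qed

lemma AE_walkin_law:
  assumes "real_distribution F" "\<not> (cdf F 0 > 0)" "0 < mu"
  shows "AE w in walkin_law mu F. 0 < fst w \<and> 0 \<le> snd (snd w)"
proof -
  have services: "prob_space (unif01 \<Otimes>\<^sub>M expo mu)"
    by (intro prob_space_pair prob_space_unif01 prob_space_expo assms(3))
  have "AE w in walkin_law mu F. 0 < fst w"
    unfolding walkin_law_def by (rule AE_pair_fstI[OF services AE_pos_if_no_atom_at_zero[OF assms(1,2)]])
  moreover have "AE w in walkin_law mu F. 0 \<le> snd (snd w)"
    using assms(1) unfolding walkin_law_def real_distribution_def
    by (intro AE_pair_sndI[OF _ services] AE_pair_sndI[OF prob_space_unif01 prob_space_expo[OF assms(3)]]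
        AE_expo_nonneg) auto
  ultimately show ?thesis by eventually_elim auto
qed

lemma Ew_early_arrival_ge:
  assumes mu: "0 < mu" and F: "real_distribution F" "\<not> (cdf F 0 > 0)"
    and tau: "\<forall>x\<in>set tau. 0 \<le> x" and t: "t \<le> 0"
  shows "Ew lam mu tau F 0 \<le> Ew lam mu tau F t"
  unfolding Ew_def
proof (intro suminf_le mult_left_mono nn_integral_mono_AE)
  fix n :: nat
  let ?S = "PiM {..<length tau} (\<lambda>_. expo mu)" and ?W = "PiM {..<n} (\<lambda>_. walkin_law mu F)"
  have S: "prob_space ?S" by (intro prob_space_PiM prob_space_expo mu)
  have W: "prob_space ?W" by (intro prob_space_PiM prob_space_walkin_law F mu)
  have "AE z in ?S \<Otimes>\<^sub>M ?W. \<forall>j<length tau. 0 \<le> fst z j"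
    by (intro AE_pair_fstI[OF W] AE_PiM_all prob_space_expo[OF mu] AE_expo_nonneg)
  moreover have "AE z in ?S \<Otimes>\<^sub>M ?W. \<forall>j<n. 0 < fst (snd z j) \<and> 0 \<le> snd (snd (snd z j))"
    by (intro AE_pair_sndI[OF S W] AE_PiM_all prob_space_walkin_law[OF F(1) mu] AE_walkin_law[OF F mu])
  ultimately have "AE z in ?S \<Otimes>\<^sub>M ?W. (\<forall>j<length tau. 0 \<le> fst z j) \<and>
      (\<forall>j<n. 0 < fst (snd z j) \<and> 0 \<le> snd (snd (snd z j)))"
    by eventually_elim auto
  then have "AE \<omega> in (unif01 \<Otimes>\<^sub>M expo mu) \<Otimes>\<^sub>M (?S \<Otimes>\<^sub>M ?W).
      (\<forall>j<length tau. 0 \<le> fst (snd \<omega>) j) \<and>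
      (\<forall>j<n. 0 < fst (snd (snd \<omega>) j) \<and> 0 \<le> snd (snd (snd (snd \<omega>) j)))"
    by (intro AE_pair_sndI prob_space_pair prob_space_unif01 prob_space_expo mu S W)
  then show "AE \<omega> in (unif01 \<Otimes>\<^sub>M expo mu) \<Otimes>\<^sub>M (?S \<Otimes>\<^sub>M ?W).
      ennreal (wait_tagged tau 0 (fst \<omega>) (fst (snd \<omega>)) n (snd (snd \<omega>)))
      \<le> ennreal (wait_tagged tau t (fst \<omega>) (fst (snd \<omega>)) n (snd (snd \<omega>)))"
    by eventually_elim (use wait_tagged_early_arrival[OF t tau] t in \<open>auto intro: ennreal_leI\<close>)
qed (simp_all add: summableI)

theorem mainTheorem6:
  fixes lam mu T :: real and tau :: "real list" and F :: "real measure"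
  assumes "0 < lam" and "0 < mu"
    and "sorted_wrt (<) tau" and "set tau \<subseteq> {0..T}"
    and "is_equilibrium lam mu tau {0..T} F"
    and "\<not> (cdf F 0 > 0)"
  shows "is_equilibrium lam mu tau {..T} F"
proof -
  interpret real_distribution F using assms(5) by (simp add: is_equilibrium_def)
  obtain c where on_support: "\<forall>t\<in>dist_support F. Ew lam mu tau F t = c"
    and off_support: "\<forall>t\<in>{0..T} - dist_support F. c \<le> Ew lam mu tau F t"
    using assms(5) by (auto simp: is_equilibrium_def)
  have on_interval: "emeasure F {0..T} = 1" using assms(5) by (simp add: is_equilibrium_def)
  then have "0 \<le> T" by (cases "0 \<le> T") auto
  have "emeasure F {..T} = 1"
    using on_interval emeasure_mono[of "{0..T}" "{..T}" F] emeasure_le_1[of "{..T}"] by auto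
  have "c \<le> Ew lam mu tau F 0"
    using on_support off_support \<open>0 \<le> T\<close> by (cases "0 \<in> dist_support F") auto
  moreover have "\<forall>x\<in>set tau. 0 \<le> x" using assms(4) by auto
  ultimately have early: "c \<le> Ew lam mu tau F t" if "t \<le> 0" for t
    using Ew_early_arrival_ge[OF assms(2) real_distribution_axioms assms(6) _ that]
    by (auto intro: order.trans)
  show ?thesis
    unfolding is_equilibrium_def
    using real_distribution_axioms \<open>emeasure F {..T} = 1\<close> on_support off_support early
    by (metis Diff_iff atLeastAtMost_iff atMost_iff linear)
qed

end
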